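(* Let $A \in \mathbb{C}^{n \times n}$, and fix $A^-\in A\{1\}$ and $A^{GD}\in A\{GD\}$. For $X\in\mathbb{C}^{n\times n}$ the following are equivalent: (i) $X = A^{GD}AA^{-}$; (ii) $AX = AA^{-}$ and $R(X)=R(A^{GD}A)$; (iii) $A^{-}AX = A^{-}AA^{-}$ and $R(X)=R(A^{GD}A)$.
   Context: For $A\in\mathbb{C}^{n\times n}$, $ind(A)$ is the smallest nonnegative integer $k$ with $\mathrm{rank}(A^k)=\mathrm{rank}(A^{k+1})$. $A\{1\}$ is the set of matrices $X$ with $AXA=A$. With $k=ind(A)$, $A\{GD\}$ is the set of G-Drazin inverses of $A$: matrices $X$ with $AXA=A$, $XA^{k+1}=A^k$, $A^{k+1}X=A^k$. $R(\cdot)$ denotes range (column space). The matrix $A^{GD}AA^-$ is called the GD1 inverse of $A$ associated with $A^-$ and $A^{GD}$. *)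

theory Defs
  imports "HOL-Analysis.Analysis"
begin

fun matpow :: "'a::semiring_1^'n^'n \<Rightarrow> nat \<Rightarrow> 'a^'n^'n" where
  "matpow A 0 = mat 1"
| "matpow A (Suc k) = A ** matpow A k"

definition ind :: "complex^'n^'n \<Rightarrow> nat" where
  "ind A = (LEAST k. rank (matpow A k) = rank (matpow A (Suc k)))"

definition inner_inverses :: "complex^'n^'n \<Rightarrow> (complex^'n^'n) set" where
  "inner_inverses A = {X. A ** X ** A = A}"

definition GD_inverses :: "complex^'n^'n \<Rightarrow> (complex^'n^'n) set" where
  "GD_inverses A = {X. A ** X ** A = A
      \<and> X ** matpow A (Suc (ind A)) = matpow A (ind A)
      \<and> matpow A (Suc (ind A)) ** X = matpow A (ind A)}"

definition col_range :: "complex^'n^'m \<Rightarrow> (complex^'m) set" where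
  "col_range M = range (\<lambda>x. M *v x)"

end

theory Submission
  imports Defs
begin

text \<open>Only the inner-inverse property of \<open>A\<^sup>G\<^sup>D\<close> matters. For any inner inverse \<open>G\<close>
  of \<open>A\<close> the matrix \<open>G A\<close> is idempotent, so it fixes every column of a matrix \<open>X\<close> with
  \<open>R(X) \<subseteq> R(G A)\<close>; hence \<open>A X = A A\<^sup>-\<close> forces \<open>X = G A X = G A A\<^sup>-\<close>. Conversely
  \<open>G A A\<^sup>- A = G A\<close> shows that \<open>G A A\<^sup>-\<close> has the same range as \<open>G A\<close>. Finally,
  multiplying by \<open>A\<close> resp. \<open>A\<^sup>-\<close> on the left shows that \<open>A X = A A\<^sup>-\<close> and
  \<open>A\<^sup>- A X = A\<^sup>- A A\<^sup>-\<close> are equivalent.\<close>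

lemma GD_inverse_is_inner_inverse: "G \<in> GD_inverses A \<Longrightarrow> G \<in> inner_inverses A"
  by (simp add: GD_inverses_def inner_inverses_def)

lemma col_range_matrix_mul_subset: "col_range (M ** N) \<subseteq> col_range M"
  unfolding col_range_def by (auto simp: matrix_vector_mul_assoc[symmetric])

lemma col_range_matrix_mul_eq:
  assumes "M ** N ** K = M"
  shows "col_range (M ** N) = col_range M"
proof
  show "col_range M \<subseteq> col_range (M ** N)"
    using col_range_matrix_mul_subset[of "M ** N" K] assms by simp
qed (rule col_range_matrix_mul_subset)

lemma idempotent_matrix_mul_eq_if_col_range_subset:
  assumes idem: "P ** P = P" and range: "col_range X \<subseteq> col_range P"
  shows "P ** X = X"
proof -
  have "P *v (X *v v) = X *v v" for v
  proof -
    obtain w where w: "X *v v = P *v w"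
      using range unfolding col_range_def by auto
    have "P *v (P *v w) = P *v w"
      by (simp add: matrix_vector_mul_assoc idem)
    then show ?thesis by (simp add: w)
  qed
  then show ?thesis by (simp add: matrix_eq matrix_vector_mul_assoc)
qed

lemma inner_inverse_left_cancel:
  assumes "A ** M ** A = A"
  shows "M ** A ** X = M ** A ** Y \<longleftrightarrow> A ** X = A ** Y"
proof
  assume "M ** A ** X = M ** A ** Y"
  then have "A ** (M ** A ** X) = A ** (M ** A ** Y)" by simp
  then show "A ** X = A ** Y" using assms by (simp add: matrix_mul_assoc)
qed (metis matrix_mul_assoc)

lemma inner_inverses_product_characterization:
  assumes M: "M \<in> inner_inverses A" and G: "G \<in> inner_inverses A"
  shows "X = G ** A ** M \<longleftrightarrow> A ** X = A ** M \<and> col_range X = col_range (G ** A)"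
proof -
  have AMA: "A ** M ** A = A" and AGA: "A ** G ** A = A"
    using M G by (simp_all add: inner_inverses_def)
  have AGAM: "A ** (G ** A ** M) = A ** M"
    using AGA by (metis matrix_mul_assoc)
  have "G ** A ** M ** A = G ** A"
    using AMA by (metis matrix_mul_assoc)
  then have range_GAM: "col_range (G ** A ** M) = col_range (G ** A)"
    by (rule col_range_matrix_mul_eq)
  have idem: "(G ** A) ** (G ** A) = G ** A"
    using AGA by (simp add: matrix_mul_assoc[symmetric])
  show ?thesis
  proof (intro iffI)
    assume "A ** X = A ** M \<and> col_range X = col_range (G ** A)"
    then have AX: "A ** X = A ** M" and range_X: "col_range X \<subseteq> col_range (G ** A)"
      by simp_all
    have "X = G ** A ** X"
      using idempotent_matrix_mul_eq_if_col_range_subset[OF idem range_X] by simp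
    also have "\<dots> = G ** A ** M"
      using AX by (metis matrix_mul_assoc)
    finally show "X = G ** A ** M" .
  qed (use AGAM range_GAM in simp)
qed

theorem theorem2p5:
  fixes A Am Agd X :: "complex^'n^'n"
  assumes "Am \<in> inner_inverses A"
    and "Agd \<in> GD_inverses A"
  shows "(X = Agd ** A ** Am
          \<longleftrightarrow> (A ** X = A ** Am \<and> col_range X = col_range (Agd ** A)))
       \<and> (X = Agd ** A ** Am
          \<longleftrightarrow> (Am ** A ** X = Am ** A ** Am \<and> col_range X = col_range (Agd ** A)))"
proof -
  have "Am ** A ** X = Am ** A ** Am \<longleftrightarrow> A ** X = A ** Am"
    using assms(1) by (simp add: inner_inverses_def inner_inverse_left_cancel)
  moreover have "X = Agd ** A ** Am
      \<longleftrightarrow> (A ** X = A ** Am \<and> col_range X = col_range (Agd ** A))"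
    using inner_inverses_product_characterization[OF assms(1)
        GD_inverse_is_inner_inverse[OF assms(2)]] .
  ultimately show ?thesis by simp
qed

end
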